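(* Let $a,b,\lambda>0$ and $\varepsilon>0$, and let $R=\{z\in\mathbf{C}:|\mathrm{Re}\,z|<a,\ |\mathrm{Im}\,z|<b+\varepsilon\}$. Let $F$ be a subharmonic function on $R$ such that $F(z)<(\min(\mathrm{Re}\,z,0))^2$ for all $z\in R$ and $F(z)<-\lambda$ for all $z\in R$ with $|\mathrm{Im}\,z|\ge b$. Set \[\delta=\min\Big(\frac{\lambda}{2a\cosh(\pi b/a)},\frac{a}{3}\Big).\] Then for all $z$ with $|\mathrm{Im}\,z|<b$ and $|\mathrm{Re}\,z|<\delta/2$, \[F(z)<-\frac{\lambda}{2a\cosh(\pi b/a)}\,\delta.\] *)

theory Defs
  imports "HOL-Analysis.Analysis"
begin

text \<open>Subharmonic functions (values in [-infinity, infinity), modelled as ereal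
  with value +infinity excluded): upper semicontinuous on the open set U and
  satisfying the sub-mean-value inequality on every closed disc contained in U.
  The circle average is the Lebesgue integral, split into positive and
  negative parts (the positive part is finite for usc functions).\<close>

definition usc_on :: "complex set \<Rightarrow> (complex \<Rightarrow> ereal) \<Rightarrow> bool" where
  "usc_on U F \<longleftrightarrow> (\<forall>c::real. openin (top_of_set U) {z\<in>U. F z < ereal c})"

definition circle_pos_part :: "(complex \<Rightarrow> ereal) \<Rightarrow> complex \<Rightarrow> real \<Rightarrow> ennreal" where
  "circle_pos_part F z r =
     (\<integral>\<^sup>+ t. e2ennreal (max 0 (F (z + of_real r * cis t))) * indicator {0..2*pi} t \<partial>lborel)"

definition circle_neg_part :: "(complex \<Rightarrow> ereal) \<Rightarrow> complex \<Rightarrow> real \<Rightarrow> ennreal" where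
  "circle_neg_part F z r =
     (\<integral>\<^sup>+ t. e2ennreal (max 0 (- F (z + of_real r * cis t))) * indicator {0..2*pi} t \<partial>lborel)"

definition subharmonic_on :: "complex set \<Rightarrow> (complex \<Rightarrow> ereal) \<Rightarrow> bool" where
  "subharmonic_on U F \<longleftrightarrow>
     open U \<and> (\<forall>z\<in>U. F z < \<infinity>) \<and> usc_on U F \<and>
     (\<forall>z r. r > 0 \<longrightarrow> cball z r \<subseteq> U \<longrightarrow>
        circle_pos_part F z r < \<infinity> \<and>
        F z \<le> (enn2ereal (circle_pos_part F z r) - enn2ereal (circle_neg_part F z r)) / ereal (2*pi))"

end

theory Submission
  imports Defs "HOL-Complex_Analysis.Complex_Analysis"
begin

text \<open>Write \<open>c = \<lambda> / (2 a cosh (\<pi> b / a))\<close> and \<open>d = min c (a / 3)\<close>, and compare \<open>F\<close> on the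
  rectangle \<open>[-d, a - d] \<times> [-b, b]\<close> with the harmonic function
  \<open>v (x + i y) = - 2 a c sin (\<pi> (x + d) / a) cosh (\<pi> y / a) + d\<^sup>2 / a (a - d - x)\<close>.
  On the horizontal edges \<open>v \<ge> -\<lambda> > F\<close>, on the left edge \<open>v = d\<^sup>2 > F\<close> and on the right edge
  \<open>v = 0 > F\<close>, so \<open>F \<le> v\<close> on the whole rectangle by the maximum principle. Near the imaginary
  axis \<open>sin (\<pi> (x + d) / a) \<ge> d / a\<close>, which gives \<open>v < - c d\<close> there.

  The maximum principle is derived from the sub-mean-value inequality: \<open>F - v + \<eta> |z|\<^sup>2\<close> is upper
  semicontinuous, so it attains its maximum on the rectangle, and not at an interior point, because
  its circle means exceed its value at the centre by \<open>\<eta> r\<^sup>2\<close>; finally \<open>\<eta> \<rightarrow> 0\<close>.\<close>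

lemma holomorphic_circle_mean:
  fixes g :: "complex \<Rightarrow> complex"
  assumes "g holomorphic_on S" "cball c r \<subseteq> S" "r > 0"
  shows "((\<lambda>t. g (c + r * cis t)) has_integral (2 * pi * g c)) {0..2*pi}"
proof -
  have "g holomorphic_on cball c r"
    using assms holomorphic_on_subset by blast
  then have "((\<lambda>u. g u / (u - c)) has_contour_integral (2 * of_real pi * \<i> * g c)) (circlepath c r)"
    using \<open>r > 0\<close> by (intro Cauchy_integral_circlepath)
      (auto intro: holomorphic_on_imp_continuous_on holomorphic_on_subset[OF _ ball_subset_cball])
  then have "((\<lambda>t. \<i> * g (c + r * cis t)) has_integral (\<i> * (2 * pi * g c))) {0..2*pi}"
    using \<open>r > 0\<close> unfolding circlepath_def
    by (subst (asm) has_contour_integral_part_circlepath_iff) (auto simp: field_simps)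
  from has_integral_mult_right[OF this, of "- \<i>"] show ?thesis
    by simp
qed

lemma Re_holomorphic_circle_mean:
  fixes g :: "complex \<Rightarrow> complex"
  assumes "g holomorphic_on S" "cball c r \<subseteq> S" "r > 0"
  shows "((\<lambda>t. Re (g (c + r * cis t))) has_integral (2 * pi * Re (g c))) {0..2*pi}"
  using has_integral_linear[OF holomorphic_circle_mean[OF assms] bounded_linear_Re]
  by (simp add: o_def)

lemma has_integral_const_0_2pi: "((\<lambda>_. C) has_integral (2 * pi * C)) {0..2*pi}" for C :: real
  using has_integral_const_real[of C 0 "2*pi"] by (simp add: mult.commute)

lemma norm_power2_circle_mean:
  assumes "r > 0"
  shows "((\<lambda>t. (cmod (c + r * cis t))\<^sup>2) has_integral (2 * pi * ((cmod c)\<^sup>2 + r\<^sup>2))) {0..2*pi}"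
proof -
  have expand: "(cmod (c + r * cis t))\<^sup>2 = 2 * Re (cnj c * (c + r * cis t)) - (cmod c)\<^sup>2 + r\<^sup>2" for t
  proof -
    have "(cmod (c + r * cis t))\<^sup>2 = (Re c + r * cos t)\<^sup>2 + (Im c + r * sin t)\<^sup>2"
      by (simp add: cmod_power2)
    also have "\<dots> = (Re c)\<^sup>2 + (Im c)\<^sup>2 + r\<^sup>2 + 2 * r * (Re c * cos t + Im c * sin t)"
      using sin_cos_squared_add[of t] by algebra
    also have "\<dots> = 2 * Re (cnj c * (c + r * cis t)) - (cmod c)\<^sup>2 + r\<^sup>2"
      by (simp add: cmod_power2 algebra_simps) (simp add: power2_eq_square)
    finally show ?thesis .
  qed
  have "((\<lambda>t. Re (cnj c * (c + r * cis t))) has_integral (2 * pi * Re (cnj c * c))) {0..2*pi}"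
    by (rule Re_holomorphic_circle_mean[of _ UNIV]) (use \<open>r > 0\<close> in \<open>auto intro: holomorphic_intros\<close>)
  moreover have "Re (cnj c * c) = (cmod c)\<^sup>2"
    by (simp add: cmod_power2) (simp add: power2_eq_square)
  ultimately have "((\<lambda>t. Re (cnj c * (c + r * cis t))) has_integral (2 * pi * (cmod c)\<^sup>2)) {0..2*pi}"
    by simp
  then have "((\<lambda>t. 2 * Re (cnj c * (c + r * cis t)) - (cmod c)\<^sup>2 + r\<^sup>2) has_integral
      (2 * (2 * pi * (cmod c)\<^sup>2) - 2 * pi * (cmod c)\<^sup>2 + 2 * pi * r\<^sup>2)) {0..2*pi}"
    by (intro has_integral_add has_integral_diff has_integral_mult_right has_integral_const_0_2pi)
  then show ?thesis
    unfolding expand by (simp add: algebra_simps)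
qed

definition circle_mean :: "(complex \<Rightarrow> ereal) \<Rightarrow> complex \<Rightarrow> real \<Rightarrow> ereal" where
  "circle_mean F z r =
     (enn2ereal (circle_pos_part F z r) - enn2ereal (circle_neg_part F z r)) / ereal (2 * pi)"

lemma subharmonic_on_le_circle_mean:
  assumes "subharmonic_on U F" "r > 0" "cball z r \<subseteq> U"
  shows "F z \<le> circle_mean F z r"
  using assms unfolding subharmonic_on_def circle_mean_def by blast

lemma e2ennreal_max_0_ereal: "e2ennreal (max 0 (ereal y)) = ennreal (max 0 y)"
  by (cases "0 \<le> y") (auto simp: max_def e2ennreal_ereal e2ennreal_neg)

lemma e2ennreal_max_0_mono: "x \<le> y \<Longrightarrow> e2ennreal (max 0 x) \<le> e2ennreal (max 0 y)"
  by (intro e2ennreal_mono max.mono) auto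

lemma circle_pos_part_le:
  assumes "\<And>t. t \<in> {0..2*pi} \<Longrightarrow> F (c + r * cis t) \<le> ereal (w t)"
    and "((\<lambda>t. max 0 (w t)) has_integral P) {0..2*pi}"
  shows "circle_pos_part F c r \<le> ennreal P"
proof -
  have "circle_pos_part F c r \<le> (\<integral>\<^sup>+ t. ennreal (indicator {0..2*pi} t * max 0 (w t)) \<partial>lborel)"
    unfolding circle_pos_part_def
    using e2ennreal_max_0_mono[OF assms(1)]
    by (intro nn_integral_mono) (auto simp: indicator_def e2ennreal_max_0_ereal)
  also have "\<dots> = ennreal P"
    by (rule nn_integral_has_integral_lebesgue[OF _ assms(2)]) auto
  finally show ?thesis .
qed

lemma circle_neg_part_ge:
  assumes "\<And>t. t \<in> {0..2*pi} \<Longrightarrow> F (c + r * cis t) \<le> ereal (w t)"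
    and "((\<lambda>t. max 0 (- w t)) has_integral N) {0..2*pi}"
  shows "ennreal N \<le> circle_neg_part F c r"
proof -
  have "ereal (- w t) \<le> - F (c + r * cis t)" if "t \<in> {0..2*pi}" for t
    using assms(1)[OF that] by (cases "F (c + r * cis t)") auto
  then have "ennreal (indicator {0..2*pi} t * max 0 (- w t))
      \<le> e2ennreal (max 0 (- F (c + r * cis t))) * indicator {0..2*pi} t" for t
    using e2ennreal_max_0_mono by (force simp: indicator_def simp flip: e2ennreal_max_0_ereal)
  then have "(\<integral>\<^sup>+ t. ennreal (indicator {0..2*pi} t * max 0 (- w t)) \<partial>lborel) \<le> circle_neg_part F c r"
    unfolding circle_neg_part_def by (rule nn_integral_mono)
  moreover have "(\<integral>\<^sup>+ t. ennreal (indicator {0..2*pi} t * max 0 (- w t)) \<partial>lborel) = ennreal N"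
    by (rule nn_integral_has_integral_lebesgue[OF _ assms(2)]) auto
  ultimately show ?thesis
    by simp
qed

lemma circle_mean_le_integral:
  assumes le: "\<And>t. t \<in> {0..2*pi} \<Longrightarrow> F (c + r * cis t) \<le> ereal (w t)"
    and "continuous_on {0..2*pi} w" "(w has_integral W) {0..2*pi}"
  shows "circle_mean F c r \<le> ereal (W / (2 * pi))"
proof -
  have "(\<lambda>t. max 0 (w t)) integrable_on {0..2*pi}" "(\<lambda>t. max 0 (- w t)) integrable_on {0..2*pi}"
    using assms(2) by (auto intro!: integrable_continuous_interval continuous_intros)
  then obtain P N where P: "((\<lambda>t. max 0 (w t)) has_integral P) {0..2*pi}"
    and N: "((\<lambda>t. max 0 (- w t)) has_integral N) {0..2*pi}"
    unfolding integrable_on_def by blast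
  have "((\<lambda>t. max 0 (w t) - max 0 (- w t)) has_integral (P - N)) {0..2*pi}"
    using P N by (rule has_integral_diff)
  moreover have "(\<lambda>t. max 0 (w t) - max 0 (- w t)) = w"
    by (auto simp: fun_eq_iff max_def)
  ultimately have W: "W = P - N"
    using assms(3) has_integral_unique by metis
  have "P \<ge> 0" "N \<ge> 0"
    using P N by (auto intro: has_integral_nonneg)
  have "enn2ereal (circle_pos_part F c r) \<le> ereal P"
    using circle_pos_part_le[OF le P] \<open>P \<ge> 0\<close> by (simp add: less_eq_ennreal.rep_eq)
  moreover have "ereal N \<le> enn2ereal (circle_neg_part F c r)"
    using circle_neg_part_ge[OF le N] \<open>N \<ge> 0\<close> by (simp add: less_eq_ennreal.rep_eq)
  ultimately have "enn2ereal (circle_pos_part F c r) - enn2ereal (circle_neg_part F c r) \<le> ereal W"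
    unfolding W using ereal_minus_mono by fastforce
  then have "circle_mean F c r \<le> ereal W / ereal (2 * pi)"
    unfolding circle_mean_def by (rule ereal_divide_right_mono) simp
  then show ?thesis
    by simp
qed

lemma usc_on_add_continuous:
  fixes G :: "complex \<Rightarrow> ereal"
  assumes "usc_on U G" "continuous_on U phi"
  shows "usc_on U (\<lambda>z. G z + ereal (phi z))"
  unfolding usc_on_def
proof
  fix c :: real
  have eq: "{z\<in>U. G z + ereal (phi z) < ereal c} = (\<Union>q. {z\<in>U. G z < ereal q} \<inter> (U \<inter> phi -` {..<c - q}))"
  proof (intro set_eqI iffI)
    fix z assume z: "z \<in> {z\<in>U. G z + ereal (phi z) < ereal c}"
    then have "G z < ereal (c - phi z)"
      by (cases "G z") auto
    then obtain q where "G z < ereal q" "q < c - phi z"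
      using ereal_dense2 by fastforce
    then show "z \<in> (\<Union>q. {z\<in>U. G z < ereal q} \<inter> (U \<inter> phi -` {..<c - q}))"
      using z by auto
  next
    fix z assume "z \<in> (\<Union>q. {z\<in>U. G z < ereal q} \<inter> (U \<inter> phi -` {..<c - q}))"
    then obtain q where "z \<in> U" "G z < ereal q" "phi z < c - q"
      by auto
    then show "z \<in> {z\<in>U. G z + ereal (phi z) < ereal c}"
      by (cases "G z") auto
  qed
  show "openin (top_of_set U) {z\<in>U. G z + ereal (phi z) < ereal c}"
    unfolding eq using assms(1) continuous_openin_preimage_gen[OF assms(2) open_lessThan]
    unfolding usc_on_def by (intro openin_Union) auto
qed

lemma usc_on_attains_max:
  fixes G :: "complex \<Rightarrow> ereal"
  assumes usc: "usc_on U G" and K: "compact K" "K \<subseteq> U" "K \<noteq> {}"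
  shows "\<exists>p\<in>K. \<forall>z\<in>K. G z \<le> G p"
proof (rule ccontr)
  assume no_max: "\<not> ?thesis"
  have "\<forall>c. \<exists>T. open T \<and> {z\<in>U. G z < ereal c} = U \<inter> T"
    using usc unfolding usc_on_def openin_open by blast
  then obtain Op where Op: "\<And>c. open (Op c) \<and> {z\<in>U. G z < ereal c} = U \<inter> Op c"
    by metis
  define C where "C = {c. \<exists>z\<in>K. ereal c < G z}"
  have cover: "K \<subseteq> (\<Union>c\<in>C. Op c)"
  proof
    fix p assume p: "p \<in> K"
    then obtain z where z: "z \<in> K" "G p < G z"
      using no_max by (meson not_le)
    then obtain c where c: "G p < ereal c" "ereal c < G z"
      using ereal_dense2 by blast
    then show "p \<in> (\<Union>c\<in>C. Op c)"
      using Op[of c] p z K(2) unfolding C_def by auto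
  qed
  obtain C' where C': "C' \<subseteq> C" "finite C'" "K \<subseteq> (\<Union>c\<in>C'. Op c)"
    by (rule compactE_image[OF K(1) _ cover]) (use Op in auto)
  have "\<forall>c\<in>C'. \<exists>z. z \<in> K \<and> ereal c < G z"
    using C'(1) unfolding C_def by blast
  then obtain zc where zc: "\<And>c. c \<in> C' \<Longrightarrow> zc c \<in> K \<and> ereal c < G (zc c)"
    by metis
  have "finite (G ` zc ` C')" "G ` zc ` C' \<noteq> {}"
    using C' K(3) by auto
  then have "Max (G ` zc ` C') \<in> G ` zc ` C'"
    by (rule Max_in)
  then obtain c0 where c0: "c0 \<in> C'" "G (zc c0) = Max (G ` zc ` C')"
    by auto
  then obtain c1 where c1: "c1 \<in> C'" "zc c0 \<in> Op c1"
    using C'(3) zc by blast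
  have "G (zc c0) < ereal c1"
    using Op[of c1] c1 zc[OF c0(1)] K(2) by auto
  also have "\<dots> < G (zc c1)"
    using zc[OF c1(1)] by auto
  also have "\<dots> \<le> G (zc c0)"
    unfolding c0(2) using C'(2) c1(1) by (intro Max_ge) auto
  finally show False
    by simp
qed

lemma perturbation_circle_mean:
  fixes g :: "complex \<Rightarrow> complex"
  assumes "g holomorphic_on S" "cball p r \<subseteq> S" "r > 0"
  shows "((\<lambda>t. eta * (cmod (p + r * cis t))\<^sup>2 - Re (g (p + r * cis t))) has_integral
      (2 * pi * (eta * ((cmod p)\<^sup>2 + r\<^sup>2) - Re (g p)))) {0..2*pi}"
proof -
  have "((\<lambda>t. eta * (cmod (p + r * cis t))\<^sup>2 - Re (g (p + r * cis t))) has_integral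
      (eta * (2 * pi * ((cmod p)\<^sup>2 + r\<^sup>2)) - 2 * pi * Re (g p))) {0..2*pi}"
    using assms by (intro has_integral_diff has_integral_mult_right norm_power2_circle_mean
        Re_holomorphic_circle_mean)
  then show ?thesis
    by (simp add: algebra_simps)
qed

lemma subharmonic_on_perturbed_local_max_minf:
  fixes g :: "complex \<Rightarrow> complex"
  assumes sub: "subharmonic_on U F" and hol: "g holomorphic_on U"
    and "eta > 0" "r > 0" "cball p r \<subseteq> U"
    and max: "\<And>z. z \<in> cball p r \<Longrightarrow>
      F z + ereal (eta * (cmod z)\<^sup>2 - Re (g z)) \<le> F p + ereal (eta * (cmod p)\<^sup>2 - Re (g p))"
  shows "F p = - \<infinity>"
proof (rule ccontr)
  define phi where "phi z = eta * (cmod z)\<^sup>2 - Re (g z)" for z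
  assume "F p \<noteq> - \<infinity>"
  moreover have "p \<in> U"
    using \<open>r > 0\<close> \<open>cball p r \<subseteq> U\<close> centre_in_cball[of p r] by auto
  then have "F p < \<infinity>"
    using sub unfolding subharmonic_on_def by auto
  ultimately obtain y where y: "F p = ereal y"
    by (cases "F p") auto
  define w where "w t = y + phi p - phi (p + r * cis t)" for t
  have circle: "p + r * cis t \<in> cball p r" for t
    using \<open>r > 0\<close> by (simp add: dist_norm norm_mult)
  have le: "F (p + r * cis t) \<le> ereal (w t)" for t
    using max[OF circle, of t] unfolding y w_def phi_def
    by (cases "F (p + r * cis t)") auto
  have "continuous_on (cball p r) g"
    using hol \<open>cball p r \<subseteq> U\<close> holomorphic_on_imp_continuous_on holomorphic_on_subset by blast
  moreover have "continuous_on {0..2*pi} (\<lambda>t. p + r * cis t)"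
    by (intro continuous_intros)
  moreover have "(\<lambda>t. p + r * cis t) ` {0..2*pi} \<subseteq> cball p r"
    using circle by blast
  ultimately have "continuous_on {0..2*pi} (\<lambda>t. g (p + r * cis t))"
    by (rule continuous_on_compose2)
  then have cont: "continuous_on {0..2*pi} w"
    unfolding w_def phi_def by (intro continuous_intros)
  have "(w has_integral (2 * pi * (y + phi p) - 2 * pi * (eta * ((cmod p)\<^sup>2 + r\<^sup>2) - Re (g p)))) {0..2*pi}"
    unfolding w_def phi_def using hol \<open>cball p r \<subseteq> U\<close> \<open>r > 0\<close>
    by (intro has_integral_diff has_integral_const_0_2pi perturbation_circle_mean)
  then have W: "(w has_integral (2 * pi * (y - eta * r\<^sup>2))) {0..2*pi}"
    by (simp add: phi_def algebra_simps)
  have "F p \<le> circle_mean F p r"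
    using sub \<open>r > 0\<close> \<open>cball p r \<subseteq> U\<close> by (rule subharmonic_on_le_circle_mean)
  also have "\<dots> \<le> ereal (y - eta * r\<^sup>2)"
    using circle_mean_le_integral[OF le cont W] by simp
  finally have "y \<le> y - eta * r\<^sup>2"
    using y by simp
  moreover have "eta * r\<^sup>2 > 0"
    using \<open>eta > 0\<close> \<open>r > 0\<close> by simp
  ultimately show False
    by simp
qed

lemma subharmonic_on_perturbed_max_on_frontier:
  fixes g :: "complex \<Rightarrow> complex"
  assumes sub: "subharmonic_on U F" and hol: "g holomorphic_on U"
    and K: "compact K" "K \<subseteq> U" "K \<noteq> {}"
    and boundary: "\<And>z. z \<in> K \<Longrightarrow> z \<notin> interior K \<Longrightarrow> F z \<le> ereal (Re (g z))"
    and "eta > 0"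
  obtains p where "p \<in> K"
    "\<And>z. z \<in> K \<Longrightarrow> F z + ereal (eta * (cmod z)\<^sup>2 - Re (g z)) \<le> ereal (eta * (cmod p)\<^sup>2)"
proof -
  define phi where "phi z = eta * (cmod z)\<^sup>2 - Re (g z)" for z
  have "continuous_on U g"
    using hol by (rule holomorphic_on_imp_continuous_on)
  then have "continuous_on U phi"
    unfolding phi_def by (intro continuous_intros)
  moreover have "usc_on U F"
    using sub by (simp add: subharmonic_on_def)
  ultimately have "usc_on U (\<lambda>z. F z + ereal (phi z))"
    by (intro usc_on_add_continuous)
  then obtain p where "p \<in> K"
    and p_max: "\<And>z. z \<in> K \<Longrightarrow> F z + ereal (phi z) \<le> F p + ereal (phi p)"
    using usc_on_attains_max[OF _ K] by blast
  have "F p + ereal (phi p) \<le> ereal (eta * (cmod p)\<^sup>2)"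
  proof (cases "p \<in> interior K")
    case True
    then obtain r where "r > 0" "cball p r \<subseteq> interior K"
      using open_contains_cball open_interior by blast
    then have "cball p r \<subseteq> K"
      using interior_subset by blast
    then have "F p = - \<infinity>"
      using p_max K(2) unfolding phi_def
      by (intro subharmonic_on_perturbed_local_max_minf[OF sub hol \<open>eta > 0\<close> \<open>r > 0\<close>]) auto
    then show ?thesis
      by simp
  next
    case False
    then have "F p + ereal (phi p) \<le> ereal (Re (g p)) + ereal (phi p)"
      using boundary \<open>p \<in> K\<close> by (intro add_right_mono)
    then show ?thesis
      unfolding phi_def by simp
  qed
  then show ?thesis
    using that \<open>p \<in> K\<close> p_max unfolding phi_def by (meson order_trans)
qed

lemma subharmonic_on_maximum_principle:
  fixes g :: "complex \<Rightarrow> complex"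
  assumes sub: "subharmonic_on U F" and hol: "g holomorphic_on U"
    and K: "compact K" "K \<subseteq> U"
    and boundary: "\<And>z. z \<in> K \<Longrightarrow> z \<notin> interior K \<Longrightarrow> F z \<le> ereal (Re (g z))"
    and "z \<in> K"
  shows "F z \<le> ereal (Re (g z))"
proof (rule ereal_le_epsilon2)
  fix e :: real
  assume "e > 0"
  have "bounded K"
    using K(1) by (rule compact_imp_bounded)
  then obtain B where B: "\<forall>z\<in>K. cmod z \<le> B"
    unfolding bounded_iff by blast
  define eta where "eta = e / (B\<^sup>2 + 1)"
  have "B\<^sup>2 + 1 > 0"
    by (simp add: add_nonneg_pos)
  then have "eta > 0"
    unfolding eta_def using \<open>e > 0\<close> by simp
  have eta_bound: "eta * (cmod p)\<^sup>2 \<le> e" if "p \<in> K" for p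
  proof -
    have "(cmod p)\<^sup>2 \<le> B\<^sup>2"
      using B that by (simp add: power_mono)
    then have "(cmod p)\<^sup>2 / (B\<^sup>2 + 1) \<le> 1"
      using \<open>B\<^sup>2 + 1 > 0\<close> by (simp add: divide_le_eq_1)
    then have "e * ((cmod p)\<^sup>2 / (B\<^sup>2 + 1)) \<le> e"
      using \<open>e > 0\<close> by (intro mult_left_le) auto
    then show ?thesis
      unfolding eta_def by simp
  qed
  obtain p where "p \<in> K"
    and "F z + ereal (eta * (cmod z)\<^sup>2 - Re (g z)) \<le> ereal (eta * (cmod p)\<^sup>2)"
    using subharmonic_on_perturbed_max_on_frontier[OF sub hol K _ boundary \<open>eta > 0\<close>] \<open>z \<in> K\<close>
    by blast
  moreover have "eta * (cmod p)\<^sup>2 \<le> e" "eta * (cmod z)\<^sup>2 \<ge> 0"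
    using eta_bound[OF \<open>p \<in> K\<close>] \<open>eta > 0\<close> by simp_all
  ultimately show "F z \<le> ereal (Re (g z)) + ereal e"
    by (cases "F z") auto
qed

lemma sin_pi_half_mult_ge:
  fixes u :: real
  assumes "0 \<le> u" "u \<le> 1/3"
  shows "u \<le> sin (pi / 2 * u)"
proof -
  define t where "t = pi / 2 * u"
  have "t \<ge> 0"
    unfolding t_def using assms by simp
  have "\<bar>sin t - t\<bar> \<le> inverse (fact 3) * \<bar>t\<bar> ^ 3"
    using Maclaurin_sin_bound[of t 3] by (simp add: numeral_3_eq_3 sin_coeff_def)
  then have "\<bar>sin t - t\<bar> \<le> t ^ 3 / 6"
    using \<open>t \<ge> 0\<close> by (simp add: fact_numeral)
  then have "t - t ^ 3 / 6 \<le> sin t"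
    unfolding abs_le_iff by linarith
  moreover have "t - t ^ 3 / 6 = u * (pi / 2 - pi ^ 3 * u\<^sup>2 / 48)"
    unfolding t_def by (simp add: power3_eq_cube power2_eq_square field_simps)
  moreover have "pi ^ 3 * u\<^sup>2 \<le> 4 ^ 3 * (1/3)\<^sup>2"
    using assms pi_less_4 by (intro mult_mono power_mono) auto
  then have "1 \<le> pi / 2 - pi ^ 3 * u\<^sup>2 / 48"
    using pi_gt3 by (simp add: power2_eq_square)
  ultimately show ?thesis
    unfolding t_def using assms(1) by (smt (verit) mult_le_cancel_left1)
qed

definition strip_barrier :: "real \<Rightarrow> real \<Rightarrow> real \<Rightarrow> complex \<Rightarrow> complex" where
  "strip_barrier a A d z =
     - of_real A * sin (of_real (pi / a) * (z + of_real d)) + of_real (d\<^sup>2 / a) * (of_real (a - d) - z)"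

lemma strip_barrier_holomorphic: "strip_barrier a A d holomorphic_on S"
  unfolding strip_barrier_def by (intro holomorphic_intros)

lemma Re_strip_barrier:
  "Re (strip_barrier a A d z) =
     - A * sin (pi / a * (Re z + d)) * cosh (pi / a * Im z) + d\<^sup>2 / a * (a - d - Re z)"
  by (simp add: strip_barrier_def Re_sin cosh_field_def)

lemma Re_strip_barrier_on_frontier:
  assumes "a > 0" "lam \<ge> 0" "0 \<le> d" "d \<le> a"
    and "z \<in> cbox (Complex (- d) (- b)) (Complex (a - d) b) - box (Complex (- d) (- b)) (Complex (a - d) b)"
  defines "g \<equiv> strip_barrier a (lam / cosh (pi * b / a)) d"
  shows "(\<bar>Im z\<bar> = b \<and> - lam \<le> Re (g z)) \<or> Re (g z) = (min (Re z) 0)\<^sup>2"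
proof -
  have z: "- d \<le> Re z" "Re z \<le> a - d" "\<bar>Im z\<bar> \<le> b"
    and edge: "Re z = - d \<or> Re z = a - d \<or> \<bar>Im z\<bar> = b"
    using assms(5) by (auto simp: in_cbox_complex_iff in_box_complex_iff)
  consider "\<bar>Im z\<bar> = b" | "Re z = - d" | "Re z = a - d"
    using edge by blast
  then show ?thesis
  proof cases
    case 1
    have "\<bar>pi / a * Im z\<bar> = pi * b / a"
      using 1 assms(1) by (simp add: abs_mult)
    then have cosh_eq: "cosh (pi / a * Im z) = cosh (pi * b / a)"
      by (metis cosh_real_abs)
    have "lam / cosh (pi * b / a) * sin (pi / a * (Re z + d)) * cosh (pi / a * Im z)
        = lam * sin (pi / a * (Re z + d))"
      unfolding cosh_eq using cosh_real_pos[of "pi * b / a"] by (simp add: field_simps)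
    also have "\<dots> \<le> lam"
      using assms(2) by (simp add: mult_left_le)
    finally have "lam / cosh (pi * b / a) * sin (pi / a * (Re z + d)) * cosh (pi / a * Im z) \<le> lam" .
    moreover have "0 \<le> d\<^sup>2 / a * (a - d - Re z)"
      using z(2) assms(1) by simp
    ultimately have "- lam \<le> Re (g z)"
      unfolding g_def Re_strip_barrier by linarith
    then show ?thesis
      using 1 by blast
  next
    case 2
    then show ?thesis
      using assms(1,3) by (simp add: g_def Re_strip_barrier power2_eq_square)
  next
    case 3
    then show ?thesis
      using assms(1,4) by (simp add: g_def Re_strip_barrier)
  qed
qed

lemma Re_strip_barrier_centre_lt:
  assumes "a > 0" "0 < d" "d \<le> c" "d \<le> a / 3" "2 * a * c \<le> A" "\<bar>Re z\<bar> < d / 2"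
  shows "Re (strip_barrier a A d z) < - c * d"
proof -
  define u where "u = d / a"
  define th where "th = pi / a * (Re z + d)"
  have "0 \<le> u" "u \<le> 1/3"
    unfolding u_def using assms(1,2,4) by (auto simp: field_simps)
  have "d / 2 \<le> Re z + d" "Re z + d \<le> a / 2"
    using assms(4,6) by (auto simp: abs_less_iff)
  then have "pi / a * (d / 2) \<le> th" "th \<le> pi / a * (a / 2)"
    unfolding th_def using assms(1) by (intro mult_left_mono; simp)+
  then have "pi / 2 * u \<le> th" "th \<le> pi / 2"
    unfolding u_def using assms(1) by simp_all
  then have "sin (pi / 2 * u) \<le> sin th"
    using \<open>0 \<le> u\<close> pi_gt_zero mult_nonneg_nonneg[of "pi / 2" u] by (intro sin_monotone_2pi_le) linarith+
  then have "u \<le> sin th"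
    using sin_pi_half_mult_ge[OF \<open>0 \<le> u\<close> \<open>u \<le> 1/3\<close>] by linarith
  have "2 * c * d \<le> A * u"
    unfolding u_def using assms(1,2,5) by (simp add: field_simps mult_right_mono)
  also have "\<dots> \<le> A * (sin th * cosh (pi / a * Im z))"
  proof (rule mult_left_mono)
    have "sin th * 1 \<le> sin th * cosh (pi / a * Im z)"
      using \<open>u \<le> sin th\<close> \<open>0 \<le> u\<close> cosh_real_ge_1 by (intro mult_left_mono) simp_all
    then show "u \<le> sin th * cosh (pi / a * Im z)"
      using \<open>u \<le> sin th\<close> by simp
    have "0 < 2 * a * c"
      using assms(1-3) by simp
    then show "0 \<le> A"
      using assms(5) by linarith
  qed
  finally have "2 * c * d \<le> A * sin th * cosh (pi / a * Im z)"
    by (simp only: mult.assoc)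
  moreover have "d\<^sup>2 / a * (a - d - Re z) < d\<^sup>2"
  proof -
    have "0 < d + Re z"
      using assms(2,6) by (auto simp: abs_less_iff)
    then have "d\<^sup>2 / a * (a - d - Re z) < d\<^sup>2 / a * a"
      using assms(1,2) by (intro mult_strict_left_mono) auto
    then show ?thesis
      using assms(1) by simp
  qed
  moreover have "d\<^sup>2 \<le> c * d"
    using assms(2,3) by (simp add: power2_eq_square)
  ultimately show ?thesis
    unfolding Re_strip_barrier th_def by linarith
qed

lemma subharmonic_le_strip_barrier:
  fixes F :: "complex \<Rightarrow> ereal"
  assumes "a > 0" "lam \<ge> 0" "eps > 0" "0 < d" "d < a"
    and sub: "subharmonic_on {z. \<bar>Re z\<bar> < a \<and> \<bar>Im z\<bar> < b + eps} F"
    and F_lt_sq: "\<And>z. \<bar>Re z\<bar> < a \<Longrightarrow> \<bar>Im z\<bar> < b + eps \<Longrightarrow> F z < ereal ((min (Re z) 0)\<^sup>2)"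
    and F_lt_lam: "\<And>z. \<bar>Re z\<bar> < a \<Longrightarrow> \<bar>Im z\<bar> < b + eps \<Longrightarrow> \<bar>Im z\<bar> \<ge> b \<Longrightarrow> F z < ereal (- lam)"
    and "z \<in> cbox (Complex (- d) (- b)) (Complex (a - d) b)"
  shows "F z \<le> ereal (Re (strip_barrier a (lam / cosh (pi * b / a)) d z))"
proof -
  define K where "K = cbox (Complex (- d) (- b)) (Complex (a - d) b)"
  define g where "g = strip_barrier a (lam / cosh (pi * b / a)) d"
  have K_strip: "K \<subseteq> {z. \<bar>Re z\<bar> < a \<and> \<bar>Im z\<bar> < b + eps}"
    unfolding K_def using assms(1,3-5) by (auto simp: in_cbox_complex_iff)
  have boundary: "F w \<le> ereal (Re (g w))" if "w \<in> K" "w \<notin> interior K" for w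
  proof -
    have w: "\<bar>Re w\<bar> < a" "\<bar>Im w\<bar> < b + eps"
      using K_strip \<open>w \<in> K\<close> by auto
    have "(\<bar>Im w\<bar> = b \<and> - lam \<le> Re (g w)) \<or> Re (g w) = (min (Re w) 0)\<^sup>2"
      using that assms(1,2,4,5) unfolding g_def K_def
      by (intro Re_strip_barrier_on_frontier) auto
    then show ?thesis
    proof (elim disjE conjE)
      assume "\<bar>Im w\<bar> = b" "- lam \<le> Re (g w)"
      then show ?thesis
        using F_lt_lam[OF w] by (simp add: less_imp_le order.strict_trans2)
    next
      assume "Re (g w) = (min (Re w) 0)\<^sup>2"
      then show ?thesis
        using F_lt_sq[OF w] by simp
    qed
  qed
  have "g holomorphic_on {z. \<bar>Re z\<bar> < a \<and> \<bar>Im z\<bar> < b + eps}"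
    unfolding g_def by (rule strip_barrier_holomorphic)
  moreover have "compact K" "z \<in> K"
    unfolding K_def using assms(9) by (simp_all add: compact_cbox)
  ultimately show ?thesis
    unfolding g_def[symmetric]
    using subharmonic_on_maximum_principle[OF sub _ _ K_strip boundary] by blast
qed

theorem lemma2p6:
  fixes a b lam eps :: real and F :: "complex \<Rightarrow> ereal"
  assumes "a > 0" and "b > 0" and "lam > 0" and "eps > 0"
    and "subharmonic_on {z. \<bar>Re z\<bar> < a \<and> \<bar>Im z\<bar> < b + eps} F"
    and "\<And>z. \<bar>Re z\<bar> < a \<Longrightarrow> \<bar>Im z\<bar> < b + eps \<Longrightarrow> F z < ereal ((min (Re z) 0)^2)"
    and "\<And>z. \<bar>Re z\<bar> < a \<Longrightarrow> \<bar>Im z\<bar> < b + eps \<Longrightarrow> \<bar>Im z\<bar> \<ge> b \<Longrightarrow> F z < ereal (- lam)"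
  shows "\<forall>z. \<bar>Im z\<bar> < b \<longrightarrow> \<bar>Re z\<bar> < min (lam / (2 * a * cosh (pi * b / a))) (a / 3) / 2 \<longrightarrow>
           F z < ereal (- (lam / (2 * a * cosh (pi * b / a))) * min (lam / (2 * a * cosh (pi * b / a))) (a / 3))"
proof -
  define c where "c = lam / (2 * a * cosh (pi * b / a))"
  define d where "d = min c (a / 3)"
  have "c > 0" "d > 0" "d \<le> c" "d \<le> a / 3"
    unfolding c_def d_def using assms(1,3) cosh_real_pos[of "pi * b / a"] by auto
  have "F z < ereal (- c * d)" if "\<bar>Im z\<bar> < b" "\<bar>Re z\<bar> < d / 2" for z
  proof -
    have "z \<in> cbox (Complex (- d) (- b)) (Complex (a - d) b)"
      using that \<open>d \<le> a / 3\<close> by (auto simp: in_cbox_complex_iff)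
    moreover have "0 \<le> lam" "d < a"
      using assms(1,3) \<open>d \<le> a / 3\<close> by simp_all
    ultimately have "F z \<le> ereal (Re (strip_barrier a (lam / cosh (pi * b / a)) d z))"
      using subharmonic_le_strip_barrier[OF assms(1) _ assms(4) \<open>d > 0\<close> _ assms(5-7)] by blast
    moreover have "Re (strip_barrier a (lam / cosh (pi * b / a)) d z) < - c * d"
      using assms(1) \<open>d > 0\<close> \<open>d \<le> c\<close> \<open>d \<le> a / 3\<close> that(2)
      by (intro Re_strip_barrier_centre_lt) (auto simp: c_def)
    ultimately show ?thesis
      by (simp add: order.strict_trans1)
  qed
  then show ?thesis
    unfolding c_def[symmetric] d_def[symmetric] by simp
qed

end
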